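(* Let $\alpha\in(0,1)$, $p=1$, and $\frac1q=1-\frac\alpha n$. Then for every $f$ with $\|f\|_{W^{\alpha,1}}<\infty$, \[ \|f\|_{GaRo_q}\le n^{(n+\alpha)/2}\|f\|_{W^{\alpha,1}}. \]
   Context: $Q_0=(0,1)^n$; cubes are subcubes of $Q_0$ with sides parallel to the axes. $P$ is the set of countable families $\{Q_i\}_{i\in I}$ of subcubes of $Q_0$ with pairwise disjoint interiors. $\|f\|_{W^{\alpha,1}}=\int_{Q_0}\int_{Q_0}\frac{|f(x)-f(y)|}{|x-y|^{n+\alpha}}\,dx\,dy$. For $1<q<\infty$, $1/q+1/q'=1$, \[ \|f\|_{GaRo_q}=\sup_{\{Q_i\}\in P}\frac{\sum_{i}\frac1{|Q_i|}\int_{Q_i}\int_{Q_i}|f(x)-f(y)|\,dx\,dy}{(\sum_i|Q_i|)^{1/q'}}. \] *)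

theory Defs
  imports "HOL-Analysis.Analysis"
begin

definition Q0 :: "(real^'n) set" where
  "Q0 = box 0 One"

text \<open>Subcubes of Q0 with sides parallel to the axes (open cubes; boundaries are null sets).\<close>
definition is_subcube :: "(real^'n) set \<Rightarrow> bool" where
  "is_subcube Q \<longleftrightarrow> (\<exists>a h. h > 0 \<and> Q = box a (a + h *\<^sub>R One) \<and> Q \<subseteq> Q0)"

definition cube_families :: "(real^'n) set set set" where
  "cube_families = {C. countable C \<and> (\<forall>Q\<in>C. is_subcube Q) \<and>
      (\<forall>Q\<in>C. \<forall>Q'\<in>C. Q \<noteq> Q' \<longrightarrow> interior Q \<inter> interior Q' = {})}"

definition W_seminorm :: "real \<Rightarrow> (real^'n \<Rightarrow> real) \<Rightarrow> ennreal" where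
  "W_seminorm \<alpha> f = (\<integral>\<^sup>+ x \<in> Q0. (\<integral>\<^sup>+ y \<in> Q0.
       ennreal (\<bar>f x - f y\<bar> / norm (x - y) powr (real CARD('n) + \<alpha>)) \<partial>lebesgue) \<partial>lebesgue)"

definition GaRo_num :: "(real^'n \<Rightarrow> real) \<Rightarrow> (real^'n) set set \<Rightarrow> ennreal" where
  "GaRo_num f C = (\<integral>\<^sup>+ Q. (\<integral>\<^sup>+ x \<in> Q. (\<integral>\<^sup>+ y \<in> Q. ennreal \<bar>f x - f y\<bar> \<partial>lebesgue) \<partial>lebesgue)
                        / emeasure lebesgue Q \<partial>count_space C)"

text \<open>Total measure sum_i |Q_i| (finite, at most 1, for families in P).\<close>
definition family_measure :: "(real^'n) set set \<Rightarrow> real" where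
  "family_measure C = enn2real (\<integral>\<^sup>+ Q. emeasure lebesgue Q \<partial>count_space C)"

definition GaRo_norm :: "real \<Rightarrow> (real^'n \<Rightarrow> real) \<Rightarrow> ennreal" where
  "GaRo_norm q f = (SUP C \<in> cube_families.
       GaRo_num f C / ennreal (family_measure C powr (1 - 1 / q)))"

end

theory Submission
  imports Defs
begin

text \<open>On a cube \<open>Q\<close> of side \<open>h\<close> every distance is at most \<open>\<surd>n h\<close>, so inserting the kernel
  \<open>|x - y|^-(n+\<alpha>)\<close> costs a factor \<open>(\<surd>n h)^(n+\<alpha>) = n^((n+\<alpha>)/2) h^n h^\<alpha>\<close>; dividing by
  \<open>|Q| = h^n\<close> leaves \<open>n^((n+\<alpha>)/2) h^\<alpha>\<close> times the Gagliardo energy of \<open>f\<close> on \<open>Q\<close>.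
  As \<open>h^n = |Q| \<le> \<Sum>|Q\<^sub>i|\<close>, we have \<open>h^\<alpha> \<le> (\<Sum>|Q\<^sub>i|)^(\<alpha>/n) = (\<Sum>|Q\<^sub>i|)^(1/q')\<close>, and the
  energies of pairwise disjoint cubes add up to at most the energy on \<open>Q0\<close>.\<close>

lemma sigma_finite_lebesgue: "sigma_finite_measure (lebesgue :: 'a::euclidean_space measure)"
proof -
  obtain A :: "'a set set" where "countable A" "A \<subseteq> sets lborel" "\<Union>A = space lborel"
      "\<forall>a\<in>A. emeasure lborel a \<noteq> \<infinity>"
    using lborel.sigma_finite_countable by blast
  then show ?thesis
    by unfold_locales (intro exI[of _ A], auto)
qed

definition oscillation_integral :: "('a::euclidean_space \<Rightarrow> real) \<Rightarrow> 'a set \<Rightarrow> ennreal" where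
  "oscillation_integral g Q = (\<integral>\<^sup>+ x \<in> Q. (\<integral>\<^sup>+ y \<in> Q. ennreal \<bar>g x - g y\<bar> \<partial>lebesgue) \<partial>lebesgue)"

definition gagliardo_energy :: "real \<Rightarrow> ('a::euclidean_space \<Rightarrow> real) \<Rightarrow> 'a set \<Rightarrow> ennreal" where
  "gagliardo_energy s g Q = (\<integral>\<^sup>+ x \<in> Q. (\<integral>\<^sup>+ y \<in> Q.
       ennreal (\<bar>g x - g y\<bar> / norm (x - y) powr s) \<partial>lebesgue) \<partial>lebesgue)"

lemma oscillation_integral_cong:
  "(\<And>x. x \<in> Q \<Longrightarrow> g x = g' x) \<Longrightarrow> oscillation_integral g Q = oscillation_integral g' Q"
  unfolding oscillation_integral_def
  by (intro nn_integral_cong) (auto split: split_indicator intro!: nn_integral_cong)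

lemma gagliardo_energy_cong:
  "(\<And>x. x \<in> Q \<Longrightarrow> g x = g' x) \<Longrightarrow> gagliardo_energy s g Q = gagliardo_energy s g' Q"
  unfolding gagliardo_energy_def
  by (intro nn_integral_cong) (auto split: split_indicator intro!: nn_integral_cong)

lemma borel_measurable_ident_lebesgue [measurable]:
  "(\<lambda>x. x) \<in> borel_measurable (lebesgue :: 'a::euclidean_space measure)"
  by (rule measurable_completion) simp

lemma borel_measurable_gagliardo_inner:
  fixes g :: "'a::euclidean_space \<Rightarrow> real"
  assumes [measurable]: "g \<in> borel_measurable lebesgue" "A \<in> sets lebesgue"
  shows "(\<lambda>x. \<integral>\<^sup>+ y \<in> A. ennreal (\<bar>g x - g y\<bar> / norm (x - y) powr s) \<partial>lebesgue) \<in> borel_measurable lebesgue"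
proof -
  interpret sigma_finite_measure "lebesgue :: 'a measure" by (rule sigma_finite_lebesgue)
  show ?thesis
    by measurable
qed

lemma oscillation_integral_le_diameter_powr:
  fixes g :: "'a::euclidean_space \<Rightarrow> real"
  assumes g: "g \<in> borel_measurable lebesgue" and Q: "Q \<in> sets lebesgue" and s: "0 \<le> s"
    and diam: "\<And>x y. x \<in> Q \<Longrightarrow> y \<in> Q \<Longrightarrow> norm (x - y) \<le> D"
  shows "oscillation_integral g Q \<le> ennreal (D powr s) * gagliardo_energy s g Q"
proof -
  define K where "K x y = \<bar>g x - g y\<bar> / norm (x - y) powr s" for x y
  have pointwise: "ennreal \<bar>g x - g y\<bar> \<le> ennreal (D powr s) * ennreal (K x y)"
    if "x \<in> Q" "y \<in> Q" for x y
  proof (cases "x = y")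
    case False
    then have "0 < norm (x - y) powr s" by simp
    moreover have "norm (x - y) powr s \<le> D powr s"
      using False diam[OF that] s by (intro powr_mono2) auto
    ultimately have "\<bar>g x - g y\<bar> \<le> D powr s * K x y"
      unfolding K_def by (simp add: divide_simps) (metis abs_ge_zero mult.commute mult_right_mono)
    then show ?thesis
      by (simp add: K_def ennreal_leI flip: ennreal_mult)
  qed simp
  have "oscillation_integral g Q
      \<le> (\<integral>\<^sup>+ x \<in> Q. (\<integral>\<^sup>+ y \<in> Q. ennreal (D powr s) * ennreal (K x y) \<partial>lebesgue) \<partial>lebesgue)"
    unfolding oscillation_integral_def
    using pointwise by (intro nn_integral_mono) (auto split: split_indicator intro!: nn_integral_mono)
  also have "\<dots> = (\<integral>\<^sup>+ x \<in> Q. ennreal (D powr s) * (\<integral>\<^sup>+ y \<in> Q. ennreal (K x y) \<partial>lebesgue) \<partial>lebesgue)"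
    using g Q unfolding K_def by (simp add: nn_integral_cmult mult.assoc)
  also have "\<dots> = ennreal (D powr s) * gagliardo_energy s g Q"
    unfolding gagliardo_energy_def K_def mult.assoc
    by (rule nn_integral_cmult)
      (intro borel_measurable_times_ennreal borel_measurable_gagliardo_inner[OF g Q] borel_measurable_indicator Q)
  finally show ?thesis .
qed

lemma nn_integral_count_space_indicator_disjoint:
  assumes "disjoint C"
  shows "(\<integral>\<^sup>+ Q. indicator Q x \<partial>count_space C) = (indicator (\<Union>C) x :: ennreal)"
proof (cases "x \<in> \<Union>C")
  case True
  then obtain P where P: "x \<in> P" "P \<in> C" by auto
  with assms have "indicator Q x = (indicator {P} Q :: ennreal)" if "Q \<in> C" for Q
    using that by (auto simp: pairwise_def disjnt_def split: split_indicator)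
  with True P show ?thesis
    by (simp cong: nn_integral_cong_simp)
qed (auto simp: nn_integral_0_iff_AE)

lemma gagliardo_energy_disjoint_family_le:
  fixes g :: "'a::euclidean_space \<Rightarrow> real"
  assumes g: "g \<in> borel_measurable lebesgue" and A: "A \<in> sets lebesgue"
    and C: "countable C" "disjoint C" and CA: "\<And>Q. Q \<in> C \<Longrightarrow> Q \<subseteq> A"
    and CS: "\<And>Q. Q \<in> C \<Longrightarrow> Q \<in> sets lebesgue"
  shows "(\<integral>\<^sup>+ Q. gagliardo_energy s g Q \<partial>count_space C) \<le> gagliardo_energy s g A"
proof -
  define G where "G x = (\<integral>\<^sup>+ y \<in> A. ennreal (\<bar>g x - g y\<bar> / norm (x - y) powr s) \<partial>lebesgue)" for x
  have G: "G \<in> borel_measurable lebesgue"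
    unfolding G_def using g A by (rule borel_measurable_gagliardo_inner)
  have "(\<integral>\<^sup>+ Q. gagliardo_energy s g Q \<partial>count_space C) \<le> (\<integral>\<^sup>+ Q. (\<integral>\<^sup>+ x \<in> Q. G x \<partial>lebesgue) \<partial>count_space C)"
    unfolding gagliardo_energy_def G_def using CA
    by (intro nn_integral_mono mult_right_mono) (auto split: split_indicator intro!: nn_integral_mono)
  also have "\<dots> = (\<integral>\<^sup>+ x. (\<integral>\<^sup>+ Q. G x * indicator Q x \<partial>count_space C) \<partial>lebesgue)"
    by (rule nn_integral_count_space_nn_integral[symmetric]) (use C CS G in auto)
  also have "\<dots> = (\<integral>\<^sup>+ x \<in> \<Union>C. G x \<partial>lebesgue)"
    by (simp add: nn_integral_cmult nn_integral_count_space_indicator_disjoint[OF C(2)])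
  also have "\<dots> \<le> (\<integral>\<^sup>+ x \<in> A. G x \<partial>lebesgue)"
    using CA by (intro nn_integral_mono mult_left_mono) (auto split: split_indicator)
  finally show ?thesis
    unfolding G_def gagliardo_energy_def .
qed

lemma emeasure_lebesgue_cube:
  fixes a :: "'a::euclidean_space"
  assumes "h > 0"
  shows "emeasure lebesgue (box a (a + h *\<^sub>R One)) = ennreal (h ^ DIM('a))"
  using assms by (simp add: emeasure_lborel_box_eq inner_simps prod_constant)

lemma norm_diff_le_in_cube:
  fixes a x y :: "'a::euclidean_space"
  assumes "x \<in> box a (a + h *\<^sub>R One)" "y \<in> box a (a + h *\<^sub>R One)"
  shows "norm (x - y) \<le> sqrt DIM('a) * h"
proof -
  have "\<bar>(x - y) \<bullet> b\<bar> \<le> h" if "b \<in> Basis" for b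
    using assms that by (auto simp: mem_box inner_simps dest!: bspec[of _ _ b])
  then have "infnorm (x - y) \<le> h"
    unfolding infnorm_def by (intro cSup_least) (auto simp: nonempty_Basis)
  then show ?thesis
    using norm_le_infnorm[of "x - y"] by (meson mult_left_mono order_trans real_sqrt_ge_zero of_nat_0_le_iff)
qed

lemma sqrt_mult_powr_div_power:
  fixes h \<alpha> :: real
  assumes h: "h > 0" and n: "n > 0"
  shows "(sqrt n * h) powr (n + \<alpha>) / h ^ n = n powr ((n + \<alpha>) / 2) * h powr \<alpha>"
proof -
  have "(sqrt n * h) powr (n + \<alpha>) = sqrt n powr (n + \<alpha>) * h powr (n + \<alpha>)"
    by (simp add: powr_mult)
  also have "sqrt n powr (n + \<alpha>) = n powr ((n + \<alpha>) / 2)"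
    by (simp add: sqrt_def root_powr_inverse powr_powr n)
  also have "h powr (n + \<alpha>) = h ^ n * h powr \<alpha>"
    using h by (simp add: powr_add powr_realpow)
  finally show ?thesis using h by simp
qed

lemma powr_le_of_power_le:
  fixes h \<alpha> M :: real
  assumes "h > 0" "n > 0" "\<alpha> \<ge> 0" "h ^ n \<le> M"
  shows "h powr \<alpha> \<le> M powr (\<alpha> / n)"
proof -
  have "h powr \<alpha> = (h ^ n) powr (\<alpha> / n)"
    using assms by (simp add: powr_realpow[symmetric] powr_powr)
  also have "\<dots> \<le> M powr (\<alpha> / n)"
    using assms by (intro powr_mono2) auto
  finally show ?thesis .
qed

lemma oscillation_integral_cube_le:
  fixes g :: "'a::euclidean_space \<Rightarrow> real" and a :: 'a and h \<alpha> :: real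
  defines "n \<equiv> DIM('a)" and "Q \<equiv> box a (a + h *\<^sub>R One)"
  assumes g: "g \<in> borel_measurable lebesgue" and h: "h > 0" and \<alpha>: "\<alpha> \<ge> 0"
  shows "oscillation_integral g Q / emeasure lebesgue Q
    \<le> ennreal (n powr ((n + \<alpha>) / 2) * h powr \<alpha>) * gagliardo_energy (n + \<alpha>) g Q"
proof -
  have "oscillation_integral g Q \<le> ennreal ((sqrt n * h) powr (n + \<alpha>)) * gagliardo_energy (n + \<alpha>) g Q"
    unfolding Q_def n_def using g \<alpha>
    by (intro oscillation_integral_le_diameter_powr norm_diff_le_in_cube) auto
  then have "oscillation_integral g Q / ennreal (h ^ n)
      \<le> ennreal ((sqrt n * h) powr (n + \<alpha>)) * gagliardo_energy (n + \<alpha>) g Q / ennreal (h ^ n)"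
    by (rule divide_right_mono_ennreal)
  also have "\<dots> = ennreal ((sqrt n * h) powr (n + \<alpha>) / h ^ n) * gagliardo_energy (n + \<alpha>) g Q"
    using h by (simp add: divide_ennreal[symmetric] ennreal_times_divide mult.commute)
  also have "(sqrt n * h) powr (n + \<alpha>) / h ^ n = n powr ((n + \<alpha>) / 2) * h powr \<alpha>"
    using h by (simp add: n_def sqrt_mult_powr_div_power)
  finally show ?thesis
    unfolding emeasure_lebesgue_cube[OF h, of a, folded Q_def n_def] .
qed

lemma cube_familiesD:
  assumes "C \<in> cube_families"
  shows "countable C" and "disjoint C"
    and "\<And>Q. Q \<in> C \<Longrightarrow> \<exists>a h. h > 0 \<and> Q = box a (a + h *\<^sub>R One)"
    and "\<And>Q. Q \<in> C \<Longrightarrow> Q \<subseteq> Q0"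
    and "\<And>Q. Q \<in> C \<Longrightarrow> Q \<in> sets lebesgue"
proof -
  show "countable C"
    using assms by (simp add: cube_families_def)
  have subcube: "is_subcube Q" if "Q \<in> C" for Q
    using assms that unfolding cube_families_def by blast
  show cube: "\<exists>a h. h > 0 \<and> Q = box a (a + h *\<^sub>R One)" and "Q \<subseteq> Q0" if "Q \<in> C" for Q
    using subcube[OF that] unfolding is_subcube_def by auto
  show "Q \<in> sets lebesgue" if "Q \<in> C" for Q
    using cube[OF that] by auto
  show "disjoint C"
  proof (rule pairwiseI)
    fix Q Q' assume QQ': "Q \<in> C" "Q' \<in> C" "Q \<noteq> Q'"
    then have "interior Q \<inter> interior Q' = {}"
      using assms unfolding cube_families_def by blast
    moreover have "interior Q = Q" "interior Q' = Q'"
      using cube[OF QQ'(1)] cube[OF QQ'(2)] by (auto intro!: interior_open)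
    ultimately show "disjnt Q Q'"
      by (simp add: disjnt_def)
  qed
qed

lemma family_measure_cube_families:
  assumes "C \<in> cube_families"
  shows "family_measure C = measure lebesgue (\<Union>C)" and "\<Union>C \<in> lmeasurable"
proof -
  note sets = cube_familiesD(5)[OF assms]
  have "\<Union>C \<subseteq> Q0"
    using cube_familiesD(4)[OF assms] by (rule Union_least)
  then have "bounded (\<Union>C)"
    unfolding Q0_def by (rule bounded_subset[OF bounded_box])
  moreover have "\<Union>C \<in> sets lebesgue"
    using sets cube_familiesD(1)[OF assms] by (intro sets.countable_Union) auto
  ultimately show "\<Union>C \<in> lmeasurable"
    by (rule bounded_set_imp_lmeasurable)
  have "disjoint_family_on id C"
    using cube_familiesD(2)[OF assms] unfolding disjoint_family_on_def pairwise_def disjnt_def by auto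
  then have "emeasure lebesgue (\<Union>C) = (\<integral>\<^sup>+ Q. emeasure lebesgue Q \<partial>count_space C)"
    using emeasure_UN_countable[of C id lebesgue] sets cube_familiesD(1)[OF assms] by simp
  then show "family_measure C = measure lebesgue (\<Union>C)"
    unfolding family_measure_def measure_def by simp
qed

lemma cube_side_power_le_family_measure:
  fixes a :: "real^'n"
  assumes C: "C \<in> cube_families" and Q: "box a (a + h *\<^sub>R One) \<in> C" and h: "h > 0"
  shows "h ^ CARD('n) \<le> family_measure C"
proof -
  have "measure lebesgue (box a (a + h *\<^sub>R One)) = h ^ CARD('n)"
    using h unfolding measure_def emeasure_lebesgue_cube[OF h] by simp
  moreover have "measure lebesgue (box a (a + h *\<^sub>R One)) \<le> measure lebesgue (\<Union>C)"
    using Q family_measure_cube_families(2)[OF C] by (intro measure_mono_fmeasurable) auto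
  ultimately show ?thesis
    using family_measure_cube_families(1)[OF C] by simp
qed

lemma GaRo_num_eq_oscillation_integral:
  "GaRo_num f C = (\<integral>\<^sup>+ Q. oscillation_integral f Q / emeasure lebesgue Q \<partial>count_space C)"
  unfolding GaRo_num_def oscillation_integral_def ..

lemma W_seminorm_eq_gagliardo_energy:
  "W_seminorm \<alpha> f = gagliardo_energy (real CARD('n) + \<alpha>) f (Q0 :: (real^'n) set)"
  unfolding W_seminorm_def gagliardo_energy_def ..

lemma GaRo_num_le:
  fixes g :: "real^'n \<Rightarrow> real"
  defines "n \<equiv> CARD('n)"
  assumes g: "g \<in> borel_measurable lebesgue" and C: "C \<in> cube_families" and \<alpha>: "\<alpha> \<ge> 0"
  shows "GaRo_num g C
    \<le> ennreal (n powr ((n + \<alpha>) / 2) * family_measure C powr (\<alpha> / n)) * gagliardo_energy (n + \<alpha>) g Q0"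
proof -
  define c where "c = n powr ((n + \<alpha>) / 2) * family_measure C powr (\<alpha> / n)"
  have cube: "oscillation_integral g Q / emeasure lebesgue Q \<le> ennreal c * gagliardo_energy (n + \<alpha>) g Q"
    if "Q \<in> C" for Q
  proof -
    obtain a h where h: "h > 0" and Q: "Q = box a (a + h *\<^sub>R One)"
      using cube_familiesD(3)[OF C \<open>Q \<in> C\<close>] by blast
    have "h powr \<alpha> \<le> family_measure C powr (\<alpha> / n)"
      using cube_side_power_le_family_measure[OF C that[unfolded Q] h] h \<alpha>
      by (intro powr_le_of_power_le) (auto simp: n_def)
    then have "ennreal (n powr ((n + \<alpha>) / 2) * h powr \<alpha>) \<le> ennreal c"
      unfolding c_def by (intro ennreal_leI mult_left_mono) auto
    moreover have "oscillation_integral g Q / emeasure lebesgue Q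
        \<le> ennreal (n powr ((n + \<alpha>) / 2) * h powr \<alpha>) * gagliardo_energy (n + \<alpha>) g Q"
      unfolding Q n_def using oscillation_integral_cube_le[OF g h \<alpha>, of a] by simp
    ultimately show ?thesis
      by (meson order_trans mult_right_mono zero_le)
  qed
  have "GaRo_num g C \<le> (\<integral>\<^sup>+ Q. ennreal c * gagliardo_energy (n + \<alpha>) g Q \<partial>count_space C)"
    unfolding GaRo_num_eq_oscillation_integral using cube by (intro nn_integral_mono) auto
  also have "\<dots> = ennreal c * (\<integral>\<^sup>+ Q. gagliardo_energy (n + \<alpha>) g Q \<partial>count_space C)"
    by (rule nn_integral_cmult) simp
  also have "\<dots> \<le> ennreal c * gagliardo_energy (n + \<alpha>) g Q0"
    using cube_familiesD[OF C] g
    by (intro mult_left_mono gagliardo_energy_disjoint_family_le) (auto simp: Q0_def)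
  finally show ?thesis
    unfolding c_def .
qed

lemma GaRo_quotient_le:
  fixes g :: "real^'n \<Rightarrow> real"
  defines "n \<equiv> CARD('n)"
  assumes g: "g \<in> borel_measurable lebesgue" and C: "C \<in> cube_families" and \<alpha>: "\<alpha> \<ge> 0"
  shows "GaRo_num g C / ennreal (family_measure C powr (\<alpha> / n))
    \<le> ennreal (n powr ((n + \<alpha>) / 2)) * gagliardo_energy (n + \<alpha>) g Q0"
proof (cases "C = {}")
  case True
  then show ?thesis
    by (simp add: GaRo_num_def nn_integral_count_space_finite)
next
  case False
  define c where "c = n powr ((n + \<alpha>) / 2)"
  define Mp where "Mp = family_measure C powr (\<alpha> / n)"
  obtain a h where "box a (a + h *\<^sub>R One) \<in> C" "h > 0"
    using False cube_familiesD(3)[OF C] by blast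
  then have "0 < family_measure C"
    using cube_side_power_le_family_measure[OF C] by (meson less_le_trans zero_less_power)
  then have Mp: "0 < Mp"
    unfolding Mp_def by simp
  have "GaRo_num g C / ennreal Mp \<le> ennreal (c * Mp) * gagliardo_energy (n + \<alpha>) g Q0 / ennreal Mp"
    using GaRo_num_le[OF g C \<alpha>] unfolding c_def Mp_def n_def by (rule divide_right_mono_ennreal)
  also have "\<dots> = ennreal c * gagliardo_energy (n + \<alpha>) g Q0 * ennreal Mp / ennreal Mp"
    using Mp by (simp add: c_def ennreal_mult mult_ac)
  also have "\<dots> = ennreal c * gagliardo_energy (n + \<alpha>) g Q0"
    using Mp by (intro mult_divide_eq_ennreal) auto
  finally show ?thesis
    unfolding c_def Mp_def .
qed

theorem mainTheorem8:
  fixes f :: "real^'n \<Rightarrow> real" and \<alpha> q :: real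
  assumes "0 < \<alpha>" and "\<alpha> < 1"
    and "1 / q = 1 - \<alpha> / real CARD('n)"
    and "f \<in> borel_measurable (lebesgue_on Q0)"
    and "W_seminorm \<alpha> f < \<infinity>"
  shows "GaRo_norm q f \<le> ennreal (real CARD('n) powr ((real CARD('n) + \<alpha>) / 2)) * W_seminorm \<alpha> f"
proof -
  define g where "g x = indicator Q0 x * f x" for x
  have g: "g \<in> borel_measurable lebesgue"
    using assms(4) unfolding g_def by (simp add: Q0_def borel_measurable_restrict_space_iff)
  have fg: "f x = g x" if "x \<in> Q0" for x
    using that by (simp add: g_def)
  have exponent: "1 - 1 / q = \<alpha> / real CARD('n)"
    using assms(3) by simp
  have W: "W_seminorm \<alpha> f = gagliardo_energy (real CARD('n) + \<alpha>) g Q0"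
    unfolding W_seminorm_eq_gagliardo_energy using fg by (rule gagliardo_energy_cong)
  have "GaRo_num f C = GaRo_num g C" if C: "C \<in> cube_families" for C
  proof -
    have "oscillation_integral f Q = oscillation_integral g Q" if "Q \<in> C" for Q
      using cube_familiesD(4)[OF C that] fg by (intro oscillation_integral_cong) auto
    then show ?thesis
      unfolding GaRo_num_eq_oscillation_integral by (intro nn_integral_cong) simp
  qed
  then have "GaRo_num f C / ennreal (family_measure C powr (1 - 1 / q))
      \<le> ennreal (real CARD('n) powr ((real CARD('n) + \<alpha>) / 2)) * W_seminorm \<alpha> f"
    if "C \<in> cube_families" for C
    using GaRo_quotient_le[OF g that, of \<alpha>] assms(1) that unfolding exponent W by simp
  then show ?thesis
    unfolding GaRo_norm_def by (rule SUP_least)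
qed

end
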